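(* Let $X$ be a real Banach space, $f\in\Gamma_0(X)$, $f(\bar x)=0$, and let $x^*\in\mathrm{bd}\,\partial f(\bar x)$. Let $\xi>0$, let $\hat x^*\in X^*\setminus\partial f(\bar x)$ with $\|\hat x^*-x^*\|<\xi$, let $\hat x\in X\setminus\{\bar x\}$ satisfy $f(\hat x)<\langle \hat x^*,\hat x-\bar x\rangle$, and let $z^*\in X^*$ with $\|z^*\|=1$ and $\langle z^*,\hat x-\bar x\rangle=\|\hat x-\bar x\|$. Define $g(u):=f(u)+\langle -x^*+\xi z^*,u-\bar x\rangle$ for $u\in X$. Then $\mathrm{Er}\,g(\bar x)\le 2\xi$.
   Context: $\Gamma_0(X)$ denotes the class of extended-real-valued proper convex lower semicontinuous functions on $X$. For convex $f$, $\partial f(x):=\{x^*\in X^*\mid \langle x^*,u-x\rangle\le f(u)-f(x)\ \forall u\in X\}$; $\mathrm{bd}$ denotes the boundary in the norm topology of $X^*$. $S_g:=\{x\mid g(x)\le 0\}$, $d(x,S)=\inf_{u\in S}\|u-x\|$ ($d(x,\emptyset)=+\infty$), and $\mathrm{Er}\,g(\bar x):=\liminf_{x\to\bar x,\ g(x)>0}\frac{g(x)}{d(x,S_g)}$. *)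

theory Defs
  imports "HOL-Analysis.Analysis"
begin

(* The dual space X^* is modelled by the bounded linear functionals 'a \<Rightarrow>\<^sub>L real,
  with the operator norm (so topological notions on it are w.r.t. the norm topology). *)

definition proper_fun :: "('a \<Rightarrow> ereal) \<Rightarrow> bool" where
  "proper_fun f \<longleftrightarrow> (\<forall>x. f x \<noteq> -\<infinity>) \<and> (\<exists>x. f x \<noteq> \<infinity>)"

definition convex_fun :: "('a::real_vector \<Rightarrow> ereal) \<Rightarrow> bool" where
  "convex_fun f \<longleftrightarrow> (\<forall>x y t. 0 \<le> t \<and> t \<le> 1 \<longrightarrow>
      f ((1 - t) *\<^sub>R x + t *\<^sub>R y) \<le> ereal (1 - t) * f x + ereal t * f y)"

definition lsc_fun :: "('a::topological_space \<Rightarrow> ereal) \<Rightarrow> bool" where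
  "lsc_fun f \<longleftrightarrow> (\<forall>c. closed {x. f x \<le> c})"

definition Gamma0 :: "('a::real_normed_vector \<Rightarrow> ereal) set" where
  "Gamma0 = {f. proper_fun f \<and> convex_fun f \<and> lsc_fun f}"

definition subdiff :: "('a::real_normed_vector \<Rightarrow> ereal) \<Rightarrow> 'a \<Rightarrow> ('a \<Rightarrow>\<^sub>L real) set" where
  "subdiff f x = {xs. \<forall>u. ereal (blinfun_apply xs (u - x)) \<le> f u - f x}"

definition sublevel0 :: "('a \<Rightarrow> ereal) \<Rightarrow> 'a set" where
  "sublevel0 g = {x. g x \<le> 0}"

definition edist :: "'a::metric_space \<Rightarrow> 'a set \<Rightarrow> ereal" where
  "edist x S = (if S = {} then \<infinity> else ereal (infdist x S))"

(* Error bound modulus: liminf over x \<rightarrow> xbar, x \<noteq> xbar, with g x > 0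
  (liminf over an empty/trivial filter is +\<infinity>). *)
definition Er :: "('a::real_normed_vector \<Rightarrow> ereal) \<Rightarrow> 'a \<Rightarrow> ereal" where
  "Er g xbar = Liminf (at xbar within {x. g x > 0}) (\<lambda>x. g x / edist x (sublevel0 g))"

end

theory Submission
  imports Defs
begin

(* Since x* is a subgradient at xbar with f(xbar) = 0, the tilted function g dominates the
  linear function \<xi> z*(u - xbar). Hence its zero sublevel set lies in the half-space
  z*(u - xbar) \<le> 0, so d(u, S_g) \<ge> z*(u - xbar) because \<parallel>z*\<parallel> = 1. Along the segment
  x_t = xbar + t(xhat - xbar) this gives d(x_t, S_g) \<ge> t \<parallel>xhat - xbar\<parallel> and g(x_t) > 0,
  while convexity gives g(x_t) \<le> t g(xhat) < 2 \<xi> t \<parallel>xhat - xbar\<parallel>. Letting t \<rightarrow> 0 bounds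
  the liminf by 2\<xi>. *)

lemma closed_subdiff: "closed (subdiff f x)"
  unfolding subdiff_def
  by (intro closed_Collect_all closed_Collect_le) (auto intro!: continuous_intros)

lemma subdiff_tilt_minorant:
  assumes "xs \<in> subdiff f x" and "f x = 0"
  shows "ereal (y (u - x)) \<le> f u + ereal ((y - xs) (u - x))"
proof -
  have "ereal (xs (u - x)) \<le> f u"
    using assms by (simp add: subdiff_def)
  then have "ereal (xs (u - x)) + ereal ((y - xs) (u - x)) \<le> f u + ereal ((y - xs) (u - x))"
    by (rule add_right_mono)
  then show ?thesis
    by (simp add: blinfun.diff_left)
qed

lemma convex_fun_tilt_segment_le:
  fixes f :: "'a::real_normed_vector \<Rightarrow> ereal" and l :: "'a \<Rightarrow>\<^sub>L real"
  assumes "convex_fun f" and "f x = 0" and "f y = ereal a" and "0 \<le> t" and "t \<le> 1"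
  shows "f (x + t *\<^sub>R (y - x)) + ereal (l (x + t *\<^sub>R (y - x) - x)) \<le> ereal (t * (a + l (y - x)))"
proof -
  have "x + t *\<^sub>R (y - x) = (1 - t) *\<^sub>R x + t *\<^sub>R y"
    by (simp add: algebra_simps)
  with assms have "f (x + t *\<^sub>R (y - x)) \<le> ereal (t * a)"
    unfolding convex_fun_def by (metis add_0 ereal_mult_zero times_ereal.simps(1))
  then have "f (x + t *\<^sub>R (y - x)) + ereal (t * l (y - x)) \<le> ereal (t * a) + ereal (t * l (y - x))"
    by (rule add_right_mono)
  then show ?thesis
    by (simp add: blinfun.scaleR_right distrib_left)
qed

lemma edist_ge_halfspace:
  fixes l :: "'a::real_normed_vector \<Rightarrow>\<^sub>L real"
  assumes "norm l \<le> 1" and "\<And>u. u \<in> S \<Longrightarrow> l u \<le> c"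
  shows "ereal (l x - c) \<le> edist x S"
proof (cases "S = {}")
  case False
  have "l x - c \<le> infdist x S"
    unfolding infdist_notempty[OF False]
  proof (rule cINF_greatest[OF False])
    fix u assume "u \<in> S"
    then have "l x - c \<le> l (x - u)"
      using assms(2) by (simp add: blinfun.diff_right)
    also have "\<dots> \<le> norm l * norm (x - u)"
      using norm_blinfun[of l "x - u"] by simp
    also have "\<dots> \<le> dist x u"
      using assms(1) by (simp add: dist_norm mult_left_le_one_le)
    finally show "l x - c \<le> dist x u" .
  qed
  with False show ?thesis
    by (simp add: edist_def)
qed (simp add: edist_def)

lemma ereal_divide_le_divide:
  assumes "0 < w" and "w \<le> a" and "0 < b" and "ereal b \<le> d"
  shows "ereal w / d \<le> ereal (a / b)"
proof (cases d)
  case (real e)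
  then have "w / e \<le> w / b"
    using assms by (simp add: divide_left_mono)
  also have "\<dots> \<le> a / b"
    using assms by (simp add: divide_right_mono)
  finally show ?thesis
    using real assms by simp
qed (use assms in auto)

lemma Liminf_le_if_frequently:
  fixes f :: "_ \<Rightarrow> 'b::complete_lattice"
  assumes "\<exists>\<^sub>F x in F. f x \<le> C"
  shows "Liminf F f \<le> C"
proof (rule Liminf_least)
  fix P assume "eventually P F"
  with assms obtain x where "f x \<le> C" "P x"
    using frequently_eventually_frequently frequently_ex by blast
  then show "(INF x\<in>Collect P. f x) \<le> C"
    by (blast intro: INF_lower2)
qed

lemma frequently_at_within_segment:
  fixes x v :: "'a::real_normed_vector"
  assumes "v \<noteq> 0" and "\<And>t. 0 < t \<Longrightarrow> t \<le> 1 \<Longrightarrow> x + t *\<^sub>R v \<in> A \<and> P (x + t *\<^sub>R v)"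
  shows "\<exists>\<^sub>F y in at x within A. P y"
proof -
  have small: "\<forall>\<^sub>F t in at_right (0::real). 0 < t \<and> t \<le> 1"
    by (auto simp: eventually_at_right_field intro!: exI[of _ 1])
  have "filterlim (\<lambda>t. x + t *\<^sub>R v) (at x within A) (at_right 0)"
  proof (rule filterlim_at_withinI)
    show "((\<lambda>t. x + t *\<^sub>R v) \<longlongrightarrow> x) (at_right 0)"
      by (auto intro!: tendsto_eq_intros)
    show "\<forall>\<^sub>F t in at_right 0. x + t *\<^sub>R v \<in> A - {x}"
      using small by eventually_elim (use assms in auto)
  qed
  moreover have "\<exists>\<^sub>F t in at_right (0::real). P (x + t *\<^sub>R v)"
    using small by (intro eventually_frequently) (auto elim!: eventually_mono simp: assms)
  ultimately show ?thesis
    unfolding frequently_def filterlim_iff by blast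
qed

lemma Er_le_segment_slope:
  fixes g :: "'a::real_normed_vector \<Rightarrow> ereal" and l :: "'a \<Rightarrow>\<^sub>L real"
  assumes minorant: "\<And>u. ereal (\<xi> * l (u - x)) \<le> g u" and "0 < \<xi>"
    and "norm l \<le> 1" and "v \<noteq> 0" and "l v = norm v"
    and segment: "\<And>t. 0 < t \<Longrightarrow> t \<le> 1 \<Longrightarrow> g (x + t *\<^sub>R v) \<le> ereal (t * c)"
  shows "Er g x \<le> ereal (c / norm v)"
proof -
  have halfspace: "l u \<le> l x" if "u \<in> sublevel0 g" for u
  proof -
    have "ereal (\<xi> * l (u - x)) \<le> 0"
      using minorant[of u] that unfolding sublevel0_def by (blast intro: order_trans)
    then have "\<xi> * l (u - x) \<le> 0"
      by simp
    with \<open>0 < \<xi>\<close> show ?thesis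
      by (simp add: blinfun.diff_right mult_le_0_iff)
  qed
  have ratio: "0 < g (x + t *\<^sub>R v) \<and>
      g (x + t *\<^sub>R v) / edist (x + t *\<^sub>R v) (sublevel0 g) \<le> ereal (c / norm v)"
    if t: "0 < t" "t \<le> 1" for t
  proof -
    let ?y = "x + t *\<^sub>R v"
    have "ereal (\<xi> * (t * norm v)) \<le> g ?y"
      using minorant[of ?y] assms by (simp add: blinfun.scaleR_right)
    then have gpos: "0 < g ?y"
      by (rule less_le_trans[rotated]) (use t assms in simp)
    then obtain w where w: "g ?y = ereal w" "0 < w" "w \<le> t * c"
      using segment[OF t] by (cases "g ?y") auto
    have "ereal (t * norm v) \<le> edist ?y (sublevel0 g)"
      using edist_ge_halfspace[of l "sublevel0 g" "l x" ?y] halfspace assms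
      by (simp add: blinfun.add_right blinfun.scaleR_right)
    then have "g ?y / edist ?y (sublevel0 g) \<le> ereal (t * c / (t * norm v))"
      unfolding w(1) using w t assms by (intro ereal_divide_le_divide) auto
    with gpos t show ?thesis
      by simp
  qed
  then have "\<exists>\<^sub>F y in at x within {y. 0 < g y}. g y / edist y (sublevel0 g) \<le> ereal (c / norm v)"
    using \<open>v \<noteq> 0\<close> by (intro frequently_at_within_segment) auto
  then show ?thesis
    unfolding Er_def by (rule Liminf_le_if_frequently)
qed

theorem mainTheorem4:
  fixes f :: "'a::banach \<Rightarrow> ereal"
    and xbar xhat :: 'a
    and xs xhs zs :: "'a \<Rightarrow>\<^sub>L real"
    and \<xi> :: real
  assumes "f \<in> Gamma0"
    and "f xbar = 0"
    and "xs \<in> frontier (subdiff f xbar)"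
    and "\<xi> > 0"
    and "xhs \<notin> subdiff f xbar"
    and "norm (xhs - xs) < \<xi>"
    and "xhat \<noteq> xbar"
    and "f xhat < ereal (blinfun_apply xhs (xhat - xbar))"
    and "norm zs = 1"
    and "blinfun_apply zs (xhat - xbar) = norm (xhat - xbar)"
  shows "Er (\<lambda>u. f u + ereal (blinfun_apply (- xs + \<xi> *\<^sub>R zs) (u - xbar))) xbar \<le> ereal (2 * \<xi>)"
proof -
  define l where "l = - xs + \<xi> *\<^sub>R zs"
  define r where "r = norm (xhat - xbar)"
  have "xs \<in> subdiff f xbar"
    using assms(3) frontier_subset_closed[OF closed_subdiff] by blast
  then have minorant: "ereal (\<xi> * zs (u - xbar)) \<le> f u + ereal (l (u - xbar))" for u
    using subdiff_tilt_minorant[of xs f xbar "\<xi> *\<^sub>R zs" u] assms(2)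
    by (simp add: l_def blinfun.add_left blinfun.diff_left blinfun.minus_left blinfun.scaleR_left)
  obtain a where a: "f xhat = ereal a" "a < xhs (xhat - xbar)"
    using assms(1,8) by (cases "f xhat") (auto simp: Gamma0_def proper_fun_def)
  have segment: "f (xbar + t *\<^sub>R (xhat - xbar)) + ereal (l (xbar + t *\<^sub>R (xhat - xbar) - xbar))
      \<le> ereal (t * (a + l (xhat - xbar)))" if "0 < t" "t \<le> 1" for t
    using convex_fun_tilt_segment_le[of f xbar xhat a t l] assms(1,2) a that by (simp add: Gamma0_def)
  have "a + l (xhat - xbar) = (a - xs (xhat - xbar)) + \<xi> * r"
    using assms(10) by (simp add: l_def r_def blinfun.add_left blinfun.diff_left blinfun.scaleR_left)
  also have "\<dots> < (xhs - xs) (xhat - xbar) + \<xi> * r"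
    using a by (simp add: blinfun.diff_left)
  also have "(xhs - xs) (xhat - xbar) \<le> norm (xhs - xs) * r"
    using norm_blinfun[of "xhs - xs" "xhat - xbar"] by (simp add: r_def)
  also have "norm (xhs - xs) * r \<le> \<xi> * r"
    using assms(6) by (simp add: r_def mult_right_mono)
  finally have "(a + l (xhat - xbar)) / r \<le> 2 * \<xi>"
    using assms(7) by (simp add: r_def divide_le_eq)
  moreover have "Er (\<lambda>u. f u + ereal (l (u - xbar))) xbar \<le> ereal ((a + l (xhat - xbar)) / r)"
    unfolding r_def using assms(4,7,9,10)
    by (intro Er_le_segment_slope[OF minorant _ _ _ _ segment]) auto
  ultimately show ?thesis
    by (simp add: l_def order_trans)
qed

end
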